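(* Let $f\in\mathbb{C}[x_1]$ have exactly $t\ge2$ monomial terms and suppose $\mathrm{ArchTrop}(f)$ has exactly $\ell$ points. Then $$\sup_{\sigma\in\mathrm{ArchTrop}(f)}\ \inf_{\rho\in\mathrm{Amoeba}(f)}|\rho-\sigma|\le(2\ell-1)\log(t-1).$$
   Context: For $f(x_1)=\sum_{i=1}^tc_ix_1^{a_i}$ (distinct $a_i$, $c_i\ne0$), $\mathrm{ArchNewt}(f)=\mathrm{Conv}\{(a_i,-\log|c_i|)\}\subset\mathbb{R}^2$ and $\mathrm{ArchTrop}(f)$ is the set of $v\in\mathbb{R}$ such that $(v,-1)$ is an outer normal of an edge of $\mathrm{ArchNewt}(f)$ (the slopes of the lower edges). $\mathrm{Amoeba}(f)=\{\log|\zeta|:\zeta\in\mathbb{C}^*,f(\zeta)=0\}$. *)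

theory Defs
  imports "HOL-Analysis.Analysis" "HOL-Computational_Algebra.Polynomial"
begin

definition supp :: "complex poly \<Rightarrow> nat set" where
  "supp f = {i. coeff f i \<noteq> 0}"

definition ArchNewt :: "complex poly \<Rightarrow> (real \<times> real) set" where
  "ArchNewt f = convex hull {(real a, - ln (cmod (coeff f a))) | a. a \<in> supp f}"

definition face_outer :: "(real \<times> real) set \<Rightarrow> real \<times> real \<Rightarrow> (real \<times> real) set" where
  "face_outer P w = {p \<in> P. \<forall>q\<in>P. w \<bullet> q \<le> w \<bullet> p}"

text \<open>Archimedean tropical variety: all v such that (v,-1) is an outer normal of an
  edge of ArchNewt f, i.e. the face of ArchNewt f with outer normal (v,-1) is an edge
  (a one-dimensional face; for a polygon in the plane and nonzero normal this means
  the face contains two distinct points).\<close>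
definition ArchTrop :: "complex poly \<Rightarrow> real set" where
  "ArchTrop f = {v. \<exists>p q. p \<in> face_outer (ArchNewt f) (v, -1) \<and>
                           q \<in> face_outer (ArchNewt f) (v, -1) \<and> p \<noteq> q}"

definition Amoeba :: "complex poly \<Rightarrow> real set" where
  "Amoeba f = {ln (cmod z) | z. z \<noteq> 0 \<and> poly f z = 0}"

end

theory Submission
  imports Defs "HOL-Computational_Algebra.Fundamental_Theorem_Algebra"
begin

text \<open>
  Let $\mathrm{trop}(v) = \max_j (j v + \ln|c_j|)$; its corners are exactly the points of
  $\mathrm{ArchTrop}(f)$. If $v$ is further than $\ln(t-1)$ from every corner, a single term
  dominates on the circle $|x| = e^v$, i.e.\ $|c_i| e^{iv} > \sum_{j \ne i} |c_j| e^{jv}$, and then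
  $f$ has exactly $i$ roots of modulus below $e^v$. This follows from Jensen's formula, obtained
  by averaging $\ln|f|$ over the scaled $N$-th roots of unity and letting $N \to \infty$: the
  limit is $\ln|\mathrm{lc}(f)| + \sum_k \max(\ln r, \ln|z_k|)$, and also
  $\ln|c_i| + i \ln r + C$ with $C$ independent of $r$, because the mean of $h^k$ for the
  Laurent polynomial $h = f/(c_i x^i) - 1$ is its constant term.

  The $\ln(t-1)$-neighbourhoods of the $\ell$ corners have total length at most
  $2 \ell \ln(t-1)$, so on both sides of a corner $\sigma$ there are such dominance points
  $p < \sigma < q$ within $(2\ell - 1)\ln(t-1) + \varepsilon$ of $\sigma$. Different terms dominate
  at $p$ and $q$, so the root counts differ and some root has log-modulus in $[p, q)$.
\<close>

definition root_unity :: "nat \<Rightarrow> nat \<Rightarrow> complex" where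
  "root_unity N m = cis (2 * pi * real m / real N)"

lemma norm_root_unity [simp]: "norm (root_unity N m) = 1"
  by (simp add: root_unity_def)

lemma root_unity_0: "root_unity N 0 = 1"
  by (simp add: root_unity_def)

lemma root_unity_power: "root_unity N m ^ e = root_unity N (m * e)"
  unfolding root_unity_def Complex.DeMoivre by (simp add: mult_ac)

lemma root_unity_power_self:
  assumes "N > 0" shows "root_unity N m ^ N = 1"
proof -
  have "root_unity N m ^ N = cis (2 * pi * real m)"
    using assms unfolding root_unity_def Complex.DeMoivre by (simp add: mult_ac)
  also have "\<dots> = cis (2 * pi) ^ m"
    unfolding Complex.DeMoivre by (simp add: mult_ac)
  also have "cis (2 * pi) = 1"
    by (simp add: complex_eq_iff)
  finally show ?thesis by simp
qed

lemma inj_on_root_unity: "N > 0 \<Longrightarrow> inj_on (root_unity N) {..<N}"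
  using Complex.bij_betw_roots_unity[of N] unfolding bij_betw_def root_unity_def by auto

lemma root_unity_mod:
  assumes N: "N > 0" shows "root_unity N e = root_unity N (e mod N)"
proof -
  have "root_unity N e = root_unity N 1 ^ (N * (e div N) + e mod N)"
    using root_unity_power[of N 1 e] by simp
  also have "\<dots> = (root_unity N 1 ^ N) ^ (e div N) * root_unity N 1 ^ (e mod N)"
    by (simp only: power_add power_mult)
  also have "\<dots> = root_unity N (e mod N)"
    using root_unity_power_self[OF N, of 1] root_unity_power[of N 1] by simp
  finally show ?thesis .
qed

lemma root_unity_eq_1_iff:
  assumes N: "N > 0" shows "root_unity N e = 1 \<longleftrightarrow> N dvd e"
proof -
  have "root_unity N e = 1 \<longleftrightarrow> root_unity N (e mod N) = root_unity N 0"
    using root_unity_mod[OF N] root_unity_0 by simp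
  also have "\<dots> \<longleftrightarrow> e mod N = 0"
    using inj_on_root_unity[OF N] N by (auto dest: inj_onD)
  finally show ?thesis by auto
qed

lemma sum_root_unity_power:
  assumes N: "N > 0"
  shows "(\<Sum>m<N. root_unity N m ^ e) = (if N dvd e then of_nat N else 0)"
proof -
  define w where "w = root_unity N e"
  have powers: "root_unity N m ^ e = w ^ m" for m
    unfolding w_def root_unity_power by (simp add: mult.commute)
  have "w ^ N = 1"
    unfolding w_def by (rule root_unity_power_self[OF N])
  moreover have "w = 1 \<longleftrightarrow> N dvd e"
    unfolding w_def by (rule root_unity_eq_1_iff[OF N])
  ultimately show ?thesis
    by (auto simp: powers sum_gp_strict)
qed

lemma sum_root_unity_power_ratio:
  assumes N: "N > 0" and n: "n < N" and q: "q < N" and r: "r \<noteq> 0"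
  shows "(\<Sum>m<N. (r * root_unity N m) ^ n / (r * root_unity N m) ^ q)
         = (if n = q then of_nat N else 0)"
proof -
  have ratio: "(r * root_unity N m) ^ n / (r * root_unity N m) ^ q
      = r ^ n / r ^ q * root_unity N m ^ (n + N - q)" for m
  proof -
    have "root_unity N m ^ (n + N - q) * root_unity N m ^ q = root_unity N m ^ n"
      using q root_unity_power_self[OF N, of m] by (simp add: power_add[symmetric] power_add)
    moreover have "root_unity N m \<noteq> 0"
      by (simp add: root_unity_def)
    ultimately have "root_unity N m ^ (n + N - q) = root_unity N m ^ n / root_unity N m ^ q"
      by (simp add: field_simps)
    then show ?thesis
      by (simp add: power_mult_distrib)
  qed
  have "N dvd (n + N - q) \<longleftrightarrow> n = q"
  proof
    assume "N dvd (n + N - q)"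
    then obtain c where c: "n + N - q = N * c" by auto
    have "0 < n + N - q" "n + N - q < 2 * N"
      using n q by auto
    then have "N * c < N * 2" "N * c \<noteq> 0"
      using c by (auto simp: mult.commute)
    then have "c < 2" "c \<noteq> 0"
      by auto
    then have "c = 1" by simp
    with c q show "n = q" by simp
  qed simp
  with r show ?thesis
    unfolding ratio sum_distrib_left[symmetric] sum_root_unity_power[OF N] by simp
qed

lemma prod_root_unity_shift:
  assumes N: "N > 0" and r: "r \<noteq> 0"
  shows "(\<Prod>m<N. z - r * root_unity N m) = z ^ N - r ^ N"
proof -
  define P where "P = (\<Prod>m<N. [:- (r * root_unity N m), 1:])"
  define Q where "Q = monom 1 N - [:r ^ N:]"
  have "P = Q"
  proof (rule poly_eqI_degree_lead_coeff[where A = "(\<lambda>m. r * root_unity N m) ` {..<N}" and n = N])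
    have "degree P = N"
      unfolding P_def by (subst degree_prod_eq_sum_degree) auto
    moreover have "lead_coeff P = 1"
      unfolding P_def by (simp add: lead_coeff_prod)
    moreover have "coeff Q N = 1"
      using N by (cases N) (auto simp: Q_def coeff_monom)
    ultimately show "degree P \<le> N" "coeff P N = coeff Q N"
      by auto
    show "degree Q \<le> N"
      unfolding Q_def by (intro degree_diff_le degree_monom_le) auto
    have "inj_on (\<lambda>m. r * root_unity N m) {..<N}"
      using inj_on_root_unity[OF N] r by (auto simp: inj_on_def)
    then show "N \<le> card ((\<lambda>m. r * root_unity N m) ` {..<N})"
      by (simp add: card_image)
    fix z assume "z \<in> (\<lambda>m. r * root_unity N m) ` {..<N}"
    then obtain m where "m < N" "z = r * root_unity N m" by auto
    then show "poly P z = poly Q z"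
      using root_unity_power_self[OF N, of m]
      by (auto simp: P_def Q_def poly_prod poly_monom power_mult_distrib)
  qed
  then have "poly P z = poly Q z" by simp
  then show ?thesis
    by (simp add: P_def Q_def poly_prod poly_monom)
qed

section \<open>A discrete Jensen formula\<close>

lemma sum_ln_norm_prod_on_circle:
  fixes root :: "nat \<Rightarrow> complex" and lc :: complex and r :: real
  assumes N: "N > 0" and r: "r > 0" and lc: "lc \<noteq> 0"
    and off_circle: "\<And>k m. k < n \<Longrightarrow> m < N \<Longrightarrow> of_real r * root_unity N m \<noteq> root k"
  shows "(\<Sum>m<N. ln (norm (lc * (\<Prod>k<n. of_real r * root_unity N m - root k))))
         = real N * ln (norm lc) + (\<Sum>k<n. ln (norm (of_real r ^ N - root k ^ N)))"
proof -
  have "(\<Sum>m<N. ln (norm (lc * (\<Prod>k<n. of_real r * root_unity N m - root k))))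
      = (\<Sum>m<N. ln (norm lc) + (\<Sum>k<n. ln (norm (of_real r * root_unity N m - root k))))"
  proof (intro sum.cong refl)
    fix m assume "m \<in> {..<N}"
    then have pos: "\<forall>k\<in>{..<n}. norm (of_real r * root_unity N m - root k) > 0"
      using off_circle by auto
    have "ln (norm (lc * (\<Prod>k<n. of_real r * root_unity N m - root k)))
        = ln (norm lc * (\<Prod>k<n. norm (of_real r * root_unity N m - root k)))"
      by (simp add: norm_mult prod_norm)
    also have "\<dots> = ln (norm lc) + ln (\<Prod>k<n. norm (of_real r * root_unity N m - root k))"
      using lc pos by (intro ln_mult_pos prod_pos) auto
    also have "ln (\<Prod>k<n. norm (of_real r * root_unity N m - root k))
             = (\<Sum>k<n. ln (norm (of_real r * root_unity N m - root k)))"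
      using pos by (intro ln_prod) auto
    finally show "ln (norm (lc * (\<Prod>k<n. of_real r * root_unity N m - root k)))
             = ln (norm lc) + (\<Sum>k<n. ln (norm (of_real r * root_unity N m - root k)))" .
  qed
  also have "\<dots> = real N * ln (norm lc)
                  + (\<Sum>k<n. \<Sum>m<N. ln (norm (of_real r * root_unity N m - root k)))"
    by (simp add: sum.distrib sum.swap[of _ "{..<N}"])
  also have "(\<Sum>k<n. \<Sum>m<N. ln (norm (of_real r * root_unity N m - root k)))
           = (\<Sum>k<n. ln (norm (of_real r ^ N - root k ^ N)))"
  proof (intro sum.cong refl)
    fix k assume "k \<in> {..<n}"
    then have "(\<Sum>m<N. ln (norm (of_real r * root_unity N m - root k)))
             = ln (\<Prod>m<N. norm (root k - of_real r * root_unity N m))"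
      using off_circle by (subst ln_prod) (force simp: norm_minus_commute)+
    also have "\<dots> = ln (norm (of_real r ^ N - root k ^ N))"
      using N r by (simp add: prod_norm prod_root_unity_shift norm_minus_commute)
    finally show "(\<Sum>m<N. ln (norm (of_real r * root_unity N m - root k)))
                = ln (norm (of_real r ^ N - root k ^ N))" .
  qed
  finally show ?thesis .
qed

lemma ln_norm_diff_power_limit:
  fixes a b :: complex
  assumes "norm b < norm a"
  shows "(\<lambda>N. ln (norm (a ^ N - b ^ N)) / real N) \<longlonglongrightarrow> ln (norm a)"
proof -
  have a: "a \<noteq> 0" using assms by auto
  define q where "q = b / a"
  have q: "norm q < 1"
    using assms a by (simp add: q_def norm_divide field_simps)
  have q_power: "1 - q ^ N \<noteq> 0" if "N > 0" for N
  proof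
    assume "1 - q ^ N = 0"
    then have "norm q ^ N = 1" by (metis norm_one norm_power right_minus_eq)
    moreover have "norm q ^ N < 1"
      using q that by (simp add: power_less_one_iff)
    ultimately show False by simp
  qed
  have eq: "ln (norm (a ^ N - b ^ N)) / real N
            = ln (norm a) + ln (norm (1 - q ^ N)) * inverse (real N)" if "N > 0" for N
  proof -
    have "a ^ N - b ^ N = a ^ N * (1 - q ^ N)"
      using a by (simp add: q_def power_divide field_simps)
    then have "norm (a ^ N - b ^ N) = norm a ^ N * norm (1 - q ^ N)"
      by (simp add: norm_mult norm_power)
    then have "ln (norm (a ^ N - b ^ N)) = real N * ln (norm a) + ln (norm (1 - q ^ N))"
      using a q_power[OF that] by (simp add: ln_mult ln_realpow)
    with that show ?thesis by (simp add: field_simps)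
  qed
  have "(\<lambda>N. ln (norm (1 - q ^ N))) \<longlonglongrightarrow> ln (norm (1 - 0 :: complex))"
    by (intro tendsto_intros LIMSEQ_power_zero q) simp
  from tendsto_add[OF tendsto_const tendsto_mult[OF this lim_inverse_n]]
  have "(\<lambda>N. ln (norm a) + ln (norm (1 - q ^ N)) * inverse (real N)) \<longlonglongrightarrow> ln (norm a)"
    by simp
  then show ?thesis
    by (rule Lim_transform_eventually) (use eq in \<open>auto intro!: eventually_sequentiallyI[of 1]\<close>)
qed

text \<open>The contribution of a root $z$ to the mean of $\ln|f|$ over the circle $|x| = r$ is
  $\max(\ln r, \ln|z|)$; written with a case split since \<open>ln 0 = 0\<close>.\<close>
definition jensen_term :: "real \<Rightarrow> complex \<Rightarrow> real" where
  "jensen_term r z = (if norm z < r then ln r else ln (norm z))"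

lemma ln_norm_radius_diff_power_limit:
  fixes z :: complex
  assumes r: "r > 0" and "norm z \<noteq> r"
  shows "(\<lambda>N. ln (norm (of_real r ^ N - z ^ N)) / real N) \<longlonglongrightarrow> jensen_term r z"
proof (cases "norm z < r")
  case True
  then show ?thesis
    using ln_norm_diff_power_limit[of z "of_real r"] r by (simp add: jensen_term_def)
next
  case False
  with assms have "r < norm z" by simp
  then show ?thesis
    using ln_norm_diff_power_limit[of "of_real r" z] r False
    by (simp add: jensen_term_def norm_minus_commute)
qed

lemma mean_ln_norm_prod_on_circle_limit:
  fixes root :: "nat \<Rightarrow> complex" and lc :: complex and r :: real
  assumes r: "r > 0" and lc: "lc \<noteq> 0"
    and off_circle: "\<And>k. k < n \<Longrightarrow> norm (root k) \<noteq> r"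
  shows "(\<lambda>N. (\<Sum>m<N. ln (norm (lc * (\<Prod>k<n. of_real r * root_unity N m - root k)))) / real N)
         \<longlonglongrightarrow> ln (norm lc) + (\<Sum>k<n. jensen_term r (root k))"
proof -
  have "of_real r * root_unity N m \<noteq> root k" if "k < n" for k m N
  proof
    assume "of_real r * root_unity N m = root k"
    then have "norm (root k) = r"
      using r by (metis norm_mult norm_of_real norm_root_unity abs_of_pos mult_1_right)
    with off_circle[OF that] show False by simp
  qed
  then have eq: "(\<Sum>m<N. ln (norm (lc * (\<Prod>k<n. of_real r * root_unity N m - root k)))) / real N
        = ln (norm lc) + (\<Sum>k<n. ln (norm (of_real r ^ N - root k ^ N)) / real N)" if "N > 0" for N
    using that r lc
    by (simp add: sum_ln_norm_prod_on_circle add_divide_distrib sum_divide_distrib)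
  have "(\<lambda>N. ln (norm lc) + (\<Sum>k<n. ln (norm (of_real r ^ N - root k ^ N)) / real N))
        \<longlonglongrightarrow> ln (norm lc) + (\<Sum>k<n. jensen_term r (root k))"
    by (intro tendsto_intros ln_norm_radius_diff_power_limit r off_circle) simp
  then show ?thesis
    by (rule Lim_transform_eventually) (use eq in \<open>auto intro!: eventually_sequentiallyI[of 1]\<close>)
qed

section \<open>A dominant monomial\<close>

lemma finite_supp: "finite (supp f)"
  unfolding supp_def by (rule finite_subset[of _ "{..degree f}"]) (auto intro: le_degree)

lemma supp_le_degree: "j \<in> supp f \<Longrightarrow> j \<le> degree f"
  unfolding supp_def by (auto intro: le_degree)

lemma poly_eq_sum_supp: "poly f x = (\<Sum>j\<in>supp f. coeff f j * x ^ j)"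
  unfolding poly_altdef
  by (rule sum.mono_neutral_right) (auto simp: supp_def intro: le_degree)

definition dominance_ratio :: "complex poly \<Rightarrow> nat \<Rightarrow> real \<Rightarrow> real" where
  "dominance_ratio f i r =
     (\<Sum>j\<in>supp f - {i}. norm (coeff f j) * r ^ j) / (norm (coeff f i) * r ^ i)"

definition remainder_poly :: "complex poly \<Rightarrow> nat \<Rightarrow> complex poly" where
  "remainder_poly f i = smult (1 / coeff f i) f - monom 1 i"

definition relative_remainder :: "complex poly \<Rightarrow> nat \<Rightarrow> complex \<Rightarrow> complex" where
  "relative_remainder f i x = poly (remainder_poly f i) x / x ^ i"

lemma poly_eq_monomial_times_remainder:
  assumes "i \<in> supp f" and "x \<noteq> 0"
  shows "poly f x = coeff f i * x ^ i * (1 + relative_remainder f i x)"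
  using assms
  by (simp add: supp_def relative_remainder_def remainder_poly_def poly_monom field_simps)

lemma degree_remainder_poly_le:
  assumes "i \<in> supp f" shows "degree (remainder_poly f i) \<le> degree f"
  unfolding remainder_poly_def
  using supp_le_degree[OF assms] degree_monom_le[of "1::complex" i] degree_smult_le
  by (intro degree_diff_le) (auto intro: order.trans)

lemma poly_remainder_poly:
  assumes i: "i \<in> supp f"
  shows "poly (remainder_poly f i) x = (\<Sum>j\<in>supp f - {i}. coeff f j / coeff f i * x ^ j)"
proof -
  have "poly (remainder_poly f i) x = (\<Sum>j\<in>supp f. coeff f j * x ^ j) / coeff f i - x ^ i"
    by (simp add: remainder_poly_def poly_monom poly_eq_sum_supp[symmetric])
  also have "(\<Sum>j\<in>supp f. coeff f j * x ^ j)
           = coeff f i * x ^ i + (\<Sum>j\<in>supp f - {i}. coeff f j * x ^ j)"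
    by (rule sum.remove[OF finite_supp i])
  also have "(coeff f i * x ^ i + (\<Sum>j\<in>supp f - {i}. coeff f j * x ^ j)) / coeff f i - x ^ i
           = (\<Sum>j\<in>supp f - {i}. coeff f j * x ^ j) / coeff f i"
    using i by (simp add: supp_def field_simps)
  finally show ?thesis
    by (simp add: sum_divide_distrib)
qed

lemma norm_relative_remainder_le:
  assumes i: "i \<in> supp f" and x: "norm x = r" and r: "r > 0"
  shows "norm (relative_remainder f i x) \<le> dominance_ratio f i r"
proof -
  have "norm (poly (remainder_poly f i) x)
        \<le> (\<Sum>j\<in>supp f - {i}. norm (coeff f j / coeff f i * x ^ j))"
    unfolding poly_remainder_poly[OF i] by (rule norm_sum)
  also have "\<dots> = (\<Sum>j\<in>supp f - {i}. norm (coeff f j) * r ^ j) / norm (coeff f i)"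
    using x by (simp add: norm_mult norm_divide norm_power sum_divide_distrib)
  finally have bound: "norm (poly (remainder_poly f i) x)
                       \<le> (\<Sum>j\<in>supp f - {i}. norm (coeff f j) * r ^ j) / norm (coeff f i)" .
  have "norm (relative_remainder f i x) = norm (poly (remainder_poly f i) x) / r ^ i"
    using x by (simp add: relative_remainder_def norm_divide norm_power)
  also have "\<dots> \<le> (\<Sum>j\<in>supp f - {i}. norm (coeff f j) * r ^ j) / norm (coeff f i) / r ^ i"
    using r by (intro divide_right_mono bound) simp
  finally show ?thesis
    by (simp add: dominance_ratio_def)
qed

lemma poly_nonzero_if_dominant:
  assumes i: "i \<in> supp f" and r: "r > 0" and dom: "dominance_ratio f i r < 1" and x: "norm x = r"
  shows "poly f x \<noteq> 0"
proof -
  have "norm (relative_remainder f i x) < 1"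
    using norm_relative_remainder_le[OF i x r] dom by simp
  then have "1 + relative_remainder f i x \<noteq> 0"
    by (metis add.inverse_unique norm_minus_cancel norm_one order_less_irrefl)
  moreover have "x \<noteq> 0" using x r by auto
  ultimately show ?thesis
    using i by (simp add: poly_eq_monomial_times_remainder supp_def)
qed

lemma isCont_dominance_ratio:
  assumes "i \<in> supp f" and "r > 0" shows "isCont (dominance_ratio f i) r"
  unfolding dominance_ratio_def using assms
  by (intro continuous_intros) (auto simp: supp_def)

text \<open>The mean of $h^k$ over the scaled $N$-th roots of unity is, for large $N$, the
  constant term of the Laurent polynomial $h^k$; in particular it does not depend on $r$.\<close>
lemma sum_relative_remainder_power_on_circle:
  assumes i: "i \<in> supp f" and r: "r > 0" and N: "k * degree f < N"
  shows "(\<Sum>m<N. relative_remainder f i (of_real r * root_unity N m) ^ k)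
         = of_nat N * coeff (remainder_poly f i ^ k) (i * k)"
proof -
  define P where "P = remainder_poly f i ^ k"
  define q where "q = i * k"
  have "degree P \<le> degree f * k"
    unfolding P_def
    using degree_power_le[of "remainder_poly f i" k] degree_remainder_poly_le[OF i]
    by (meson mult_le_mono1 order.trans)
  then have P: "degree P < N" using N by (simp add: mult.commute)
  have q: "q < N"
    using N supp_le_degree[OF i] by (simp add: q_def) (metis le_less_trans mult.commute mult_le_mono2)
  have poly_P: "poly P x = (\<Sum>n<N. coeff P n * x ^ n)" for x
    unfolding poly_altdef using P
    by (intro sum.mono_neutral_left) (auto simp: coeff_eq_0)
  have "(\<Sum>m<N. relative_remainder f i (of_real r * root_unity N m) ^ k)
      = (\<Sum>m<N. \<Sum>n<N. coeff P n * ((of_real r * root_unity N m) ^ n / (of_real r * root_unity N m) ^ q))"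
  proof -
    have "relative_remainder f i x ^ k = poly P x / x ^ q" for x
      by (simp add: relative_remainder_def P_def q_def poly_power power_divide power_mult)
    then show ?thesis
      unfolding poly_P by (simp add: sum_divide_distrib)
  qed
  also have "\<dots> = (\<Sum>n<N. coeff P n * (\<Sum>m<N. (of_real r * root_unity N m) ^ n
                                                / (of_real r * root_unity N m) ^ q))"
    by (subst sum.swap) (simp add: sum_distrib_left)
  also have "\<dots> = (\<Sum>n<N. coeff P n * (if n = q then of_nat N else 0))"
    using N q r by (intro sum.cong refl) (simp add: sum_root_unity_power_ratio)
  also have "\<dots> = of_nat N * coeff P q"
    using q by (simp add: if_distrib sum.delta cong: if_cong)
  finally show ?thesis by (simp add: P_def q_def)
qed

lemma norm_mean_power_le:
  fixes w :: "nat \<Rightarrow> 'a::{real_normed_field, banach}"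
  assumes "\<And>m. m < N \<Longrightarrow> norm (w m) \<le> t" and "0 \<le> t"
  shows "norm ((\<Sum>m<N. w m ^ k) / of_nat N) \<le> t ^ k"
proof (cases "N = 0")
  case False
  have "norm (\<Sum>m<N. w m ^ k) \<le> (\<Sum>m<N. norm (w m) ^ k)"
    using norm_sum[of "\<lambda>m. w m ^ k" "{..<N}"] by (simp add: norm_power)
  also have "\<dots> \<le> real N * t ^ k"
    using sum_mono[of "{..<N}" "\<lambda>m. norm (w m) ^ k" "\<lambda>_. t ^ k"] assms(1) power_mono by force
  finally show ?thesis
    using False by (simp add: norm_divide field_simps)
qed (simp add: \<open>0 \<le> t\<close>)

lemma sums_mean_Ln_one_plus:
  fixes w :: "nat \<Rightarrow> complex"
  assumes "\<And>m. m < N \<Longrightarrow> norm (w m) < 1"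
  shows "(\<lambda>k. (-1) ^ Suc k / of_nat k * ((\<Sum>m<N. w m ^ k) / of_nat N))
           sums ((\<Sum>m<N. Ln (1 + w m)) / of_nat N)"
proof -
  have "(\<lambda>k. \<Sum>m<N. (-1) ^ Suc k / of_nat k * w m ^ k) sums (\<Sum>m<N. Ln (1 + w m))"
    using assms by (intro sums_sum Ln_series) auto
  then show ?thesis
    unfolding sum_distrib_left[symmetric] times_divide_eq_right by (rule sums_divide)
qed

text \<open>By Mercator's series, the mean of $\ln(1 + h)$ over the circle is
  $\sum_k (-1)^{k+1} m_k / k$, where $m_k$ is the mean of $h^k$, i.e.\ the constant term
  of $h^k$.\<close>
definition mean_ln_remainder :: "complex poly \<Rightarrow> nat \<Rightarrow> complex" where
  "mean_ln_remainder f i =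
     (\<Sum>k. (-1) ^ Suc k / of_nat k * coeff (remainder_poly f i ^ k) (i * k))"

lemma mean_ln_norm_one_plus_remainder_limit:
  assumes i: "i \<in> supp f" and r: "r > 0" and dom: "dominance_ratio f i r < 1"
  shows "(\<lambda>N. (\<Sum>m<N. ln (norm (1 + relative_remainder f i (of_real r * root_unity N m)))) / real N)
         \<longlonglongrightarrow> Re (mean_ln_remainder f i)"
proof -
  define t where "t = dominance_ratio f i r"
  define w where "w N m = relative_remainder f i (of_real r * root_unity N m)" for N m
  define c :: "nat \<Rightarrow> complex" where "c k = (-1) ^ Suc k / of_nat k" for k
  define a where "a k N = c k * ((\<Sum>m<N. w N m ^ k) / of_nat N)" for k N
  have w: "norm (w N m) \<le> t" for N m
    unfolding w_def t_def using r
    by (intro norm_relative_remainder_le[OF i]) (simp_all add: norm_mult)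
  have "0 \<le> t" "t < 1"
    using w[of 0 0] dom by (auto simp: t_def intro: order.trans[OF norm_ge_zero])
  have limit: "(\<lambda>N. a k N) \<longlonglongrightarrow> c k * coeff (remainder_poly f i ^ k) (i * k)" for k
  proof (rule tendsto_eventually)
    show "\<forall>\<^sub>F N in sequentially. a k N = c k * coeff (remainder_poly f i ^ k) (i * k)"
      using eventually_gt_at_top[of "k * degree f"]
    proof eventually_elim
      case (elim N)
      then show ?case
        using sum_relative_remainder_power_on_circle[OF i r elim] by (simp add: a_def w_def)
    qed
  qed
  have bound: "norm (a k N) \<le> t ^ k" for k N
  proof -
    have "norm (c k) \<le> 1"
      by (cases k) (simp_all add: c_def norm_divide norm_power del: of_nat_Suc)
    then show ?thesis
      using mult_mono[OF _ norm_mean_power_le[OF w \<open>0 \<le> t\<close>], of "norm (c k)" 1]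
      by (simp add: a_def norm_mult del: times_divide_eq_right)
  qed
  have dominated: "\<forall>\<^sub>F (k, N) in at_top \<times>\<^sub>F sequentially. norm (a k N) \<le> t ^ k"
    by (intro always_eventually) (simp add: bound)
  have "summable (\<lambda>k. t ^ k)"
    using \<open>0 \<le> t\<close> \<open>t < 1\<close> by (intro summable_geometric) simp
  from tannerys_theorem[OF limit dominated this trivial_limit_sequentially]
  have "(\<lambda>N. \<Sum>k. a k N) \<longlonglongrightarrow> mean_ln_remainder f i"
    unfolding mean_ln_remainder_def c_def by (elim conjE)
  then have lim: "(\<lambda>N. Re (\<Sum>k. a k N)) \<longlonglongrightarrow> Re (mean_ln_remainder f i)"
    by (rule tendsto_Re)
  have eq: "Re (\<Sum>k. a k N) = (\<Sum>m<N. ln (norm (1 + w N m))) / real N" for N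
  proof -
    have small: "norm (w N m) < 1" for m
      using w \<open>t < 1\<close> le_less_trans by blast
    then have "1 + w N m \<noteq> 0" for m
      by (metis add_eq_0_iff norm_minus_cancel norm_one order_less_irrefl)
    moreover have "(\<lambda>k. a k N) sums ((\<Sum>m<N. Ln (1 + w N m)) / of_nat N)"
      unfolding a_def c_def by (rule sums_mean_Ln_one_plus[OF small])
    ultimately show ?thesis
      by (simp add: sums_unique[symmetric] Re_divide_of_nat Re_sum)
  qed
  show ?thesis
    using lim unfolding eq w_def .
qed

section \<open>Counting roots inside a circle of dominance\<close>

locale factorised_poly =
  fixes f :: "complex poly" and root :: "nat \<Rightarrow> complex"
  assumes nonzero: "f \<noteq> 0"
    and factorisation: "smult (lead_coeff f) (\<Prod>k<degree f. [:-root k, 1:]) = f"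
begin

lemma poly_eq_prod_roots: "poly f x = lead_coeff f * (\<Prod>k<degree f. x - root k)"
proof -
  have "poly f x = poly (smult (lead_coeff f) (\<Prod>k<degree f. [:-root k, 1:])) x"
    using factorisation by simp
  then show ?thesis
    by (simp add: poly_prod)
qed

lemma poly_root: "k < degree f \<Longrightarrow> poly f (root k) = 0"
  unfolding poly_eq_prod_roots by (auto intro!: prod_zero)

lemma norm_root_neq_dominant_radius:
  assumes "i \<in> supp f" and "r > 0" and "dominance_ratio f i r < 1" and "k < degree f"
  shows "norm (root k) \<noteq> r"
  using poly_nonzero_if_dominant[OF assms(1-3)] poly_root[OF assms(4)] by auto

text \<open>Both sides are the limit of the mean of $\ln|f|$ over $N$ equally spaced points of the
  circle $|x| = r$.\<close>
lemma jensen_formula_dominant: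
  assumes i: "i \<in> supp f" and r: "r > 0" and dom: "dominance_ratio f i r < 1"
  shows "ln (norm (lead_coeff f)) + (\<Sum>k<degree f. jensen_term r (root k))
         = ln (norm (coeff f i)) + real i * ln r + Re (mean_ln_remainder f i)"
proof -
  define mean where "mean N = (\<Sum>m<N. ln (norm (poly f (of_real r * root_unity N m)))) / real N" for N
  have "mean \<longlonglongrightarrow> ln (norm (lead_coeff f)) + (\<Sum>k<degree f. jensen_term r (root k))"
    unfolding mean_def poly_eq_prod_roots using nonzero r norm_root_neq_dominant_radius[OF i r dom]
    by (intro mean_ln_norm_prod_on_circle_limit) auto
  moreover have "mean \<longlonglongrightarrow> ln (norm (coeff f i)) + real i * ln r + Re (mean_ln_remainder f i)"
  proof -
    have split: "ln (norm (poly f x)) = ln (norm (coeff f i)) + real i * ln r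
                   + ln (norm (1 + relative_remainder f i x))" if x: "norm x = r" for x
    proof -
      have "x \<noteq> 0" using x r by auto
      then have "norm (poly f x) = norm (coeff f i) * r ^ i * norm (1 + relative_remainder f i x)"
        using i x by (simp add: poly_eq_monomial_times_remainder norm_mult norm_power)
      moreover have "1 + relative_remainder f i x \<noteq> 0"
        using poly_nonzero_if_dominant[OF i r dom x] poly_eq_monomial_times_remainder[OF i \<open>x \<noteq> 0\<close>]
        by auto
      ultimately show ?thesis
        using i r by (simp add: supp_def ln_mult_pos ln_realpow)
    qed
    have eq: "mean N = ln (norm (coeff f i)) + real i * ln r
           + (\<Sum>m<N. ln (norm (1 + relative_remainder f i (of_real r * root_unity N m)))) / real N"
      if "N > 0" for N
      using that r by (simp add: mean_def split norm_mult sum.distrib field_simps)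
    have lim: "(\<lambda>N. ln (norm (coeff f i)) + real i * ln r
           + (\<Sum>m<N. ln (norm (1 + relative_remainder f i (of_real r * root_unity N m)))) / real N)
        \<longlonglongrightarrow> ln (norm (coeff f i)) + real i * ln r + Re (mean_ln_remainder f i)"
      by (intro tendsto_intros mean_ln_norm_one_plus_remainder_limit[OF i r dom])
    show ?thesis
      by (rule Lim_transform_eventually[OF lim]) (use eq in \<open>auto intro!: eventually_sequentiallyI[of 1]\<close>)
  qed
  ultimately show ?thesis
    by (rule LIMSEQ_unique)
qed

definition count_roots_below :: "real \<Rightarrow> nat" where
  "count_roots_below r = card {k. k < degree f \<and> norm (root k) < r}"

text \<open>Comparing Jensen's formula at $r$ and at a slightly larger radius $s$, with no root of
  modulus in $(r, s]$ and the $i$-th term still dominant at $s$.\<close>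
lemma count_roots_below_dominant:
  assumes i: "i \<in> supp f" and r: "r > 0" and dom: "dominance_ratio f i r < 1"
  shows "count_roots_below r = i"
proof -
  have "\<forall>\<^sub>F s in at_right r. dominance_ratio f i s < 1"
    using order_tendstoD(2)[OF isCont_dominance_ratio[OF i r, unfolded isCont_def] dom]
    by (simp add: eventually_at_split)
  moreover have "\<forall>\<^sub>F s in at_right r. \<forall>k\<in>{..<degree f}. r < norm (root k) \<longrightarrow> s < norm (root k)"
  proof (intro eventually_ball_finite ballI finite_lessThan)
    fix k
    show "\<forall>\<^sub>F s in at_right r. r < norm (root k) \<longrightarrow> s < norm (root k)"
      by (cases "r < norm (root k)") (auto elim: eventually_mono[OF eventually_at_right_real])
  qed
  ultimately have "\<forall>\<^sub>F s in at_right r. dominance_ratio f i s < 1 \<and> r < s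
                    \<and> (\<forall>k\<in>{..<degree f}. r < norm (root k) \<longrightarrow> s < norm (root k))"
    using eventually_at_right_less[of r] by eventually_elim auto
  from eventually_happens'[OF trivial_limit_at_right_real this]
  obtain s where dom_s: "dominance_ratio f i s < 1" and "r < s"
    and gap: "\<And>k. k < degree f \<Longrightarrow> r < norm (root k) \<Longrightarrow> s < norm (root k)"
    by auto
  have "jensen_term s (root k) - jensen_term r (root k)
        = (if norm (root k) < r then ln s - ln r else 0)" if k: "k < degree f" for k
    using \<open>r < s\<close> gap[OF k] norm_root_neq_dominant_radius[OF i r dom k]
    by (auto simp: jensen_term_def)
  then have "(\<Sum>k<degree f. jensen_term s (root k) - jensen_term r (root k))
             = real (count_roots_below r) * (ln s - ln r)"
    by (simp add: sum.If_cases count_roots_below_def Int_def conj_commute)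
  moreover have "(\<Sum>k<degree f. jensen_term s (root k) - jensen_term r (root k))
                 = real i * (ln s - ln r)"
    using jensen_formula_dominant[OF i r dom] jensen_formula_dominant[OF i _ dom_s] r \<open>r < s\<close>
    by (simp add: sum_subtractf algebra_simps)
  moreover have "ln r < ln s" using r \<open>r < s\<close> by simp
  ultimately show ?thesis by simp
qed

lemma amoeba_point_between_dominant_radii:
  assumes "p < q"
    and ip: "ip \<in> supp f" "dominance_ratio f ip (exp p) < 1"
    and iq: "iq \<in> supp f" "dominance_ratio f iq (exp q) < 1"
    and "ip \<noteq> iq"
  obtains \<rho> where "\<rho> \<in> Amoeba f" "p \<le> \<rho>" "\<rho> < q"
proof -
  have "\<exists>k<degree f. exp p \<le> norm (root k) \<and> norm (root k) < exp q"
  proof (rule ccontr)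
    assume no_root: "\<not> ?thesis"
    have "norm (root k) < exp p \<longleftrightarrow> norm (root k) < exp q" if "k < degree f" for k
    proof
      assume "norm (root k) < exp p"
      with exp_less_mono[OF \<open>p < q\<close>] show "norm (root k) < exp q" by linarith
    next
      assume "norm (root k) < exp q"
      with no_root that show "norm (root k) < exp p" by (meson not_le)
    qed
    then have "count_roots_below (exp p) = count_roots_below (exp q)"
      unfolding count_roots_below_def by (intro arg_cong[where f = card] Collect_cong) auto
    then show False
      using count_roots_below_dominant[OF ip(1) _ ip(2)] count_roots_below_dominant[OF iq(1) _ iq(2)]
        \<open>ip \<noteq> iq\<close> by simp
  qed
  then obtain k where k: "k < degree f" "exp p \<le> norm (root k)" "norm (root k) < exp q"
    by blast
  then have "norm (root k) > 0"
    using exp_gt_zero[of p] by linarith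
  then have "ln (norm (root k)) \<in> Amoeba f" "p \<le> ln (norm (root k))" "ln (norm (root k)) < q"
    using k poly_root ln_less_cancel_iff[of "norm (root k)" "exp q"]
    by (auto simp: Amoeba_def ln_ge_iff)
  then show ?thesis by (rule that)
qed

end

section \<open>The tropical polynomial and its corners\<close>

text \<open>The face of \<open>ArchNewt f\<close> with outer normal $(v, -1)$ is spanned by the points
  $(j, -\ln|c_j|)$ at which \<open>trop_term f j v\<close> is maximal.\<close>
definition trop_term :: "complex poly \<Rightarrow> nat \<Rightarrow> real \<Rightarrow> real" where
  "trop_term f j v = real j * v + ln (norm (coeff f j))"

definition trop_max :: "complex poly \<Rightarrow> real \<Rightarrow> real" where
  "trop_max f v = Max ((\<lambda>j. trop_term f j v) ` supp f)"

definition corners :: "complex poly \<Rightarrow> real set" where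
  "corners f = {v. \<exists>i\<in>supp f. \<exists>j\<in>supp f. i \<noteq> j \<and> trop_term f i v = trop_max f v
                                                  \<and> trop_term f j v = trop_max f v}"

lemma trop_term_le_max: "j \<in> supp f \<Longrightarrow> trop_term f j v \<le> trop_max f v"
  unfolding trop_max_def by (rule Max_ge) (auto simp: finite_supp)

lemma trop_max_attained:
  assumes "supp f \<noteq> {}" obtains j where "j \<in> supp f" "trop_term f j v = trop_max f v"
proof -
  have "trop_max f v \<in> (\<lambda>j. trop_term f j v) ` supp f"
    unfolding trop_max_def using assms by (intro Max_in) (auto simp: finite_supp)
  then show ?thesis using that by auto
qed

lemma continuous_on_Max_image:
  fixes g :: "'i \<Rightarrow> 'a::topological_space \<Rightarrow> 'b::linorder_topology"
  assumes "finite A" "A \<noteq> {}" "\<And>a. a \<in> A \<Longrightarrow> continuous_on S (g a)"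
  shows "continuous_on S (\<lambda>x. Max ((\<lambda>a. g a x) ` A))"
  using assms
proof (induction A rule: finite_ne_induct)
  case (insert a A)
  then show ?case
    by (simp add: Max_insert continuous_on_max)
qed simp

lemma corner_between:
  assumes i: "i \<in> supp f" and strict: "\<And>j. j \<in> supp f - {i} \<Longrightarrow> trop_term f j v1 < trop_term f i v1"
    and j: "j \<in> supp f" and beaten: "trop_term f i v2 < trop_term f j v2"
  obtains c where "c \<in> corners f" "min v1 v2 \<le> c" "c \<le> max v1 v2"
proof -
  define A where "A = supp f - {i}"
  have A: "finite A" "A \<noteq> {}" "j \<in> A"
    using beaten j finite_supp[of f] by (auto simp: A_def)
  define others where "others v = Max ((\<lambda>j. trop_term f j v) ` A)" for v
  have others_ge: "trop_term f k v \<le> others v" if "k \<in> A" for k v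
    unfolding others_def using A that by (intro Max_ge) auto
  have others_attained: "\<exists>k\<in>A. others v = trop_term f k v" for v
  proof -
    have "others v \<in> (\<lambda>j. trop_term f j v) ` A"
      unfolding others_def using A by (intro Max_in) auto
    then show ?thesis by auto
  qed
  define gap where "gap v = trop_term f i v - others v" for v
  have "continuous_on UNIV gap"
    unfolding gap_def others_def trop_term_def
    by (intro continuous_intros continuous_on_Max_image A)
  moreover have "gap v1 > 0"
  proof -
    obtain k where "k \<in> A" "others v1 = trop_term f k v1"
      using others_attained by blast
    with strict show ?thesis
      unfolding gap_def A_def by simp
  qed
  moreover have "gap v2 < 0"
    using others_ge[OF A(3), of v2] beaten by (simp add: gap_def)
  ultimately obtain c where c: "min v1 v2 \<le> c" "c \<le> max v1 v2" "gap c = 0"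
    using IVT2'[of gap v2 0 v1] IVT'[of gap v2 0 v1]
    by (cases "v1 \<le> v2") (force intro: continuous_on_subset)+
  obtain k where k: "k \<in> A" "others c = trop_term f k c"
    using others_attained by blast
  obtain m where m: "m \<in> supp f" "trop_term f m c = trop_max f c"
    using trop_max_attained i by blast
  have "trop_max f c \<le> trop_term f i c"
    using m others_ge[of m c] c(3) by (cases "m = i") (auto simp: gap_def A_def)
  then have "trop_term f i c = trop_max f c" "trop_term f k c = trop_max f c"
    using trop_term_le_max[OF i, of c] k c(3) by (auto simp: gap_def)
  with i k have "c \<in> corners f"
    unfolding corners_def A_def by blast
  with c that show ?thesis by blast
qed

lemma corners_nonempty:
  assumes two: "card (supp f) \<ge> 2"
  shows "corners f \<noteq> {}"
proof -
  have fin: "finite (supp f)" by (rule finite_supp)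
  obtain x y where xy: "x \<in> supp f" "y \<in> supp f" "x \<noteq> y"
    using two card_le_Suc0_iff_eq[OF fin] by (auto simp: not_le[symmetric])
  define a where "a = Min (supp f)"
  define b where "b = Max (supp f)"
  have a: "a \<in> supp f" and b: "b \<in> supp f"
    using fin xy unfolding a_def b_def by (auto intro!: Min_in Max_in)
  have "a \<le> x" "a \<le> y" "x \<le> b" "y \<le> b"
    using fin xy by (auto simp: a_def b_def)
  with xy have "a < b" by linarith
  define slope where "slope j = (ln (norm (coeff f a)) - ln (norm (coeff f j))) / (real j - real a)" for j
  define v1 where "v1 = Min (slope ` (supp f - {a})) - 1"
  define v2 where "v2 = slope b + 1"
  have "trop_term f j v1 < trop_term f a v1" if j: "j \<in> supp f - {a}" for j
  proof -
    have "a \<le> j" using j fin by (simp add: a_def)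
    with j have "0 < real j - real a" by simp
    moreover have "Min (slope ` (supp f - {a})) \<le> slope j"
      using j fin by simp
    ultimately show ?thesis
      by (simp add: v1_def slope_def trop_term_def pos_le_divide_eq algebra_simps)
  qed
  moreover have "trop_term f a v2 < trop_term f b v2"
  proof -
    have "(real b - real a) * slope b = ln (norm (coeff f a)) - ln (norm (coeff f b))"
      using \<open>a < b\<close> by (simp add: slope_def)
    then show ?thesis
      using \<open>a < b\<close> unfolding v2_def trop_term_def by (simp add: algebra_simps)
  qed
  ultimately show ?thesis
    using corner_between[OF a _ b] by blast
qed

lemma trop_term_less_max_off_corners:
  assumes "v \<notin> corners f" and i: "i \<in> supp f" "trop_term f i v = trop_max f v"
    and j: "j \<in> supp f - {i}"
  shows "trop_term f j v < trop_term f i v"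
  using assms trop_term_le_max[of j f v] unfolding corners_def
  by (metis (mono_tags, lifting) DiffE insertCI mem_Collect_eq order_neq_le_trans)

text \<open>Two terms cross with slope difference at least $1$, so if they were within $L$ of each
  other at $v$, a corner would lie within distance $L$ of $v$.\<close>
lemma trop_term_gap_far_from_corners:
  assumes far: "\<And>c. c \<in> corners f \<Longrightarrow> L < \<bar>v - c\<bar>" and "L \<ge> 0"
    and i: "i \<in> supp f" "trop_term f i v = trop_max f v" and j: "j \<in> supp f - {i}"
  shows "trop_term f j v < trop_term f i v - L"
proof -
  have strict: "trop_term f k v < trop_term f i v" if "k \<in> supp f - {i}" for k
    using trop_term_less_max_off_corners[OF _ i that] far[of v] \<open>L \<ge> 0\<close> by force
  define d where "d = trop_term f i v - trop_term f j v"
  show ?thesis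
  proof (rule ccontr)
  assume "\<not> ?thesis"
  then have d: "0 < d" "d \<le> L"
    using strict[OF j] by (auto simp: d_def)
  define u where "u = v + d / (real j - real i)"
  have "trop_term f j u = trop_term f i u"
    using j unfolding u_def d_def trop_term_def by (simp add: field_simps)
  have "\<bar>real j - real i\<bar> \<ge> 1"
    using j by (auto simp flip: of_nat_diff)
  then have "d / \<bar>real j - real i\<bar> \<le> d"
    using d by (simp add: divide_le_eq mult_le_cancel_left1)
  then have "\<bar>u - v\<bar> \<le> L"
    using d by (simp add: u_def abs_divide)
  show False
  proof (cases "trop_term f i u = trop_max f u")
    case True
    then have "u \<in> corners f"
      using i j \<open>trop_term f j u = trop_term f i u\<close> unfolding corners_def by force
    with far \<open>\<bar>u - v\<bar> \<le> L\<close> show False by force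
  next
    case False
    then have "trop_term f i u < trop_max f u"
      using trop_term_le_max[OF i(1)] order_le_neq_trans by blast
    moreover obtain m where "m \<in> supp f" "trop_term f m u = trop_max f u"
      using trop_max_attained i by blast
    ultimately obtain c where "c \<in> corners f" "min v u \<le> c" "c \<le> max v u"
      using corner_between[OF i(1) strict, of m u] by auto
    then have "\<bar>v - c\<bar> \<le> \<bar>u - v\<bar>" by (auto simp: min_def max_def split: if_splits)
    with far[OF \<open>c \<in> corners f\<close>] \<open>\<bar>u - v\<bar> \<le> L\<close> show False by simp
  qed
  qed
qed

lemma dominance_ratio_exp_less_1_iff:
  assumes "i \<in> supp f"
  shows "dominance_ratio f i (exp v) < 1
         \<longleftrightarrow> (\<Sum>j\<in>supp f - {i}. exp (trop_term f j v)) < exp (trop_term f i v)"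
proof -
  have "exp (trop_term f j v) = norm (coeff f j) * exp v ^ j" if "j \<in> supp f" for j
    using that by (simp add: supp_def trop_term_def exp_add exp_of_nat_mult[symmetric] mult.commute)
  with assms show ?thesis
    by (simp add: dominance_ratio_def supp_def divide_less_eq)
qed

lemma dominant_trop_term_greater:
  assumes i: "i \<in> supp f" and dom: "dominance_ratio f i (exp v) < 1" and j: "j \<in> supp f - {i}"
  shows "trop_term f j v < trop_term f i v"
proof -
  have "exp (trop_term f j v) \<le> (\<Sum>k\<in>supp f - {i}. exp (trop_term f k v))"
    using j finite_supp by (intro member_le_sum) auto
  also have "\<dots> < exp (trop_term f i v)"
    using dom dominance_ratio_exp_less_1_iff[OF i] by simp
  finally show ?thesis by simp
qed

text \<open>If $v$ is further than $\ln(t-1)$ from every corner, the maximal term exceeds each of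
  the other $t - 1$ terms by more than a factor $t - 1$.\<close>
lemma dominant_far_from_corners:
  assumes two: "card (supp f) \<ge> 2"
    and far: "\<And>c. c \<in> corners f \<Longrightarrow> ln (real (card (supp f)) - 1) < \<bar>v - c\<bar>"
  obtains i where "i \<in> supp f" "dominance_ratio f i (exp v) < 1"
proof -
  define L where "L = ln (real (card (supp f)) - 1)"
  have "L \<ge> 0" using two by (simp add: L_def)
  have "supp f \<noteq> {}" using two by auto
  then obtain i where i: "i \<in> supp f" "trop_term f i v = trop_max f v"
    by (rule trop_max_attained)
  have card: "card (supp f - {i}) = card (supp f) - 1"
    using i(1) finite_supp by simp
  then have "card (supp f - {i}) > 0" using two by simp
  then have "supp f - {i} \<noteq> {}" by (metis card.empty less_irrefl)
  then have "(\<Sum>j\<in>supp f - {i}. exp (trop_term f j v)) < (\<Sum>j\<in>supp f - {i}. exp (trop_term f i v - L))"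
    using trop_term_gap_far_from_corners[OF far[folded L_def] \<open>L \<ge> 0\<close> i] finite_supp
    by (intro sum_strict_mono) auto
  also have "\<dots> = real (card (supp f) - 1) * (exp (trop_term f i v) / exp L)"
    using card by (simp add: exp_diff)
  also have "\<dots> = exp (trop_term f i v)"
    using two by (simp add: L_def of_nat_diff)
  finally have "dominance_ratio f i (exp v) < 1"
    using dominance_ratio_exp_less_1_iff[OF i(1)] by simp
  with i(1) show ?thesis by (rule that)
qed

lemma dominant_indices_differ_across_corner:
  assumes s: "s \<in> corners f" and "p < s" "s < q"
    and ip: "ip \<in> supp f" "dominance_ratio f ip (exp p) < 1"
    and iq: "iq \<in> supp f" "dominance_ratio f iq (exp q) < 1"
  shows "ip \<noteq> iq"
proof
  assume "ip = iq"
  obtain a b where ab: "a \<in> supp f" "b \<in> supp f" "a \<noteq> b"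
    "trop_term f a s = trop_max f s" "trop_term f b s = trop_max f s"
    using s unfolding corners_def by blast
  then obtain c where c: "c \<in> supp f" "c \<noteq> ip" "trop_term f c s = trop_max f s"
    by metis
  have "trop_term f c p < trop_term f ip p" "trop_term f c q < trop_term f ip q"
    using dominant_trop_term_greater[OF ip] dominant_trop_term_greater[OF iq] c \<open>ip = iq\<close> by auto
  have affine: "trop_term f c x - trop_term f ip x
                 = (real c - real ip) * x + (ln (norm (coeff f c)) - ln (norm (coeff f ip)))" for x
    by (simp add: trop_term_def algebra_simps)
  have "trop_term f c s < trop_term f ip s"
  proof (cases "real ip \<le> real c")
    case True
    then have "(real c - real ip) * s \<le> (real c - real ip) * q"
      using \<open>s < q\<close> by (intro mult_left_mono) auto
    with affine[of s] affine[of q] \<open>trop_term f c q < trop_term f ip q\<close> show ?thesis by linarith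
  next
    case False
    then have "(real c - real ip) * s \<le> (real c - real ip) * p"
      using \<open>p < s\<close> by (intro mult_left_mono_neg) auto
    with affine[of s] affine[of p] \<open>trop_term f c p < trop_term f ip p\<close> show ?thesis by linarith
  qed
  with trop_term_le_max[OF ip(1), of s] c show False by simp
qed

section \<open>The Archimedean tropical variety is the corner locus\<close>

definition newton_point :: "complex poly \<Rightarrow> nat \<Rightarrow> real \<times> real" where
  "newton_point f a = (real a, - ln (norm (coeff f a)))"

lemma inner_newton_point: "(v, -1) \<bullet> newton_point f a = trop_term f a v"
  by (simp add: newton_point_def trop_term_def mult.commute)

lemma ArchNewt_eq_convex_hull: "ArchNewt f = convex hull (newton_point f ` supp f)"
  unfolding ArchNewt_def newton_point_def by (rule arg_cong[where f = "\<lambda>X. convex hull X"]) auto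

lemma inner_le_on_convex_hull:
  assumes "\<And>y. y \<in> S \<Longrightarrow> w \<bullet> y \<le> M" and "x \<in> convex hull S"
  shows "w \<bullet> x \<le> M"
proof -
  have "convex hull S \<subseteq> {y. w \<bullet> y \<le> M}"
    by (rule hull_minimal) (use assms(1) convex_halfspace_le in auto)
  with assms(2) show ?thesis by blast
qed

lemma convex_hull_insert_inner_maximum:
  fixes a :: "'a::real_inner"
  assumes less: "\<And>y. y \<in> S \<Longrightarrow> w \<bullet> y < w \<bullet> a"
    and x: "x \<in> convex hull (insert a S)" and "w \<bullet> a \<le> w \<bullet> x"
  shows "x = a"
proof (cases "S = {}")
  case True
  with x show ?thesis by simp
next
  case False
  obtain u v y where uvy: "0 \<le> u" "0 \<le> v" "u + v = 1" "y \<in> convex hull S"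
    "x = u *\<^sub>R a + v *\<^sub>R y"
    using x unfolding convex_hull_insert[OF False] by blast
  have "convex hull S \<subseteq> {y. w \<bullet> y < w \<bullet> a}"
    by (rule hull_minimal) (use less convex_halfspace_lt in auto)
  with uvy(4) have "w \<bullet> y < w \<bullet> a" by blast
  moreover have "w \<bullet> x = u * (w \<bullet> a) + v * (w \<bullet> y)"
    using uvy(5) by (simp add: inner_add_right)
  moreover have "u = 1 - v" using uvy(3) by simp
  ultimately have "v * (w \<bullet> a - w \<bullet> y) \<le> 0"
    using \<open>w \<bullet> a \<le> w \<bullet> x\<close> by (simp add: algebra_simps)
  then have "v = 0"
    using \<open>w \<bullet> y < w \<bullet> a\<close> uvy(2) by (simp add: mult_le_0_iff)
  with uvy show ?thesis by simp
qed

lemma inner_le_trop_max_on_ArchNewt: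
  assumes "x \<in> ArchNewt f" shows "(v, -1) \<bullet> x \<le> trop_max f v"
  by (rule inner_le_on_convex_hull[OF _ assms[unfolded ArchNewt_eq_convex_hull]])
     (auto simp: inner_newton_point trop_term_le_max)

lemma newton_point_in_face:
  assumes "a \<in> supp f" and "trop_term f a v = trop_max f v"
  shows "newton_point f a \<in> face_outer (ArchNewt f) (v, -1)"
  using assms inner_le_trop_max_on_ArchNewt unfolding face_outer_def ArchNewt_eq_convex_hull
  by (auto intro: hull_inc simp: inner_newton_point)

lemma face_eq_newton_point_if_unique_max:
  assumes x: "x \<in> face_outer (ArchNewt f) (v, -1)"
    and a: "a \<in> supp f" "trop_term f a v = trop_max f v"
    and others: "\<And>b. b \<in> supp f - {a} \<Longrightarrow> trop_term f b v < trop_max f v"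
  shows "x = newton_point f a"
proof (rule convex_hull_insert_inner_maximum)
  show "x \<in> convex hull (insert (newton_point f a) (newton_point f ` (supp f - {a})))"
    using x a(1) unfolding face_outer_def ArchNewt_eq_convex_hull
    by (metis (no_types, lifting) image_insert insert_Diff mem_Collect_eq)
  show "(v, -1) \<bullet> y < (v, -1) \<bullet> newton_point f a" if y: "y \<in> newton_point f ` (supp f - {a})" for y
  proof -
    obtain b where "b \<in> supp f - {a}" "y = newton_point f b"
      using y by blast
    with others a show ?thesis
      by (simp add: inner_newton_point)
  qed
  show "(v, -1) \<bullet> newton_point f a \<le> (v, -1) \<bullet> x"
    using x newton_point_in_face[OF a] unfolding face_outer_def by blast
qed

lemma ArchTrop_eq_corners:
  assumes "supp f \<noteq> {}"
  shows "ArchTrop f = corners f"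
proof
  show "corners f \<subseteq> ArchTrop f"
  proof
    fix v assume "v \<in> corners f"
    then obtain i j where "i \<in> supp f" "j \<in> supp f" "i \<noteq> j"
      "trop_term f i v = trop_max f v" "trop_term f j v = trop_max f v"
      unfolding corners_def by blast
    then show "v \<in> ArchTrop f"
      unfolding ArchTrop_def using newton_point_in_face by (fastforce simp: newton_point_def)
  qed
  show "ArchTrop f \<subseteq> corners f"
  proof
    fix v assume v: "v \<in> ArchTrop f"
    show "v \<in> corners f"
    proof (rule ccontr)
      assume "v \<notin> corners f"
      obtain a where a: "a \<in> supp f" "trop_term f a v = trop_max f v"
        using trop_max_attained assms by blast
      have "trop_term f b v < trop_max f v" if "b \<in> supp f - {a}" for b
        using trop_term_less_max_off_corners[OF \<open>v \<notin> corners f\<close> a that] a by simp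
      then have "x = newton_point f a" if "x \<in> face_outer (ArchNewt f) (v, -1)" for x
        using face_eq_newton_point_if_unique_max[OF that a] by blast
      with v show False
        unfolding ArchTrop_def by blast
    qed
  qed
qed

section \<open>Covering an interval by neighbourhoods of the corners\<close>

lemma interval_length_le_cover:
  fixes C :: "real set"
  assumes fin: "finite C" and L: "L \<ge> 0" and "a \<le> b"
    and cover: "{a..b} \<subseteq> (\<Union>c\<in>C. {c - L..c + L})"
  shows "b - a \<le> 2 * real (card C) * L"
proof -
  have "ennreal (b - a) = emeasure lborel {a..b}"
    using \<open>a \<le> b\<close> by simp
  also have "\<dots> \<le> emeasure lborel (\<Union>c\<in>C. {c - L..c + L})"
    by (rule emeasure_mono[OF cover]) (auto intro!: sets.finite_UN fin)
  also have "\<dots> \<le> (\<Sum>c\<in>C. emeasure lborel {c - L..c + L})"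
    by (rule emeasure_subadditive_finite[OF fin]) auto
  also have "\<dots> = (\<Sum>c\<in>C. ennreal (2 * L))"
    using L by simp
  also have "\<dots> = ennreal (2 * real (card C) * L)"
    using L by (subst sum_ennreal) (auto simp: mult_ac)
  finally show ?thesis
    using L by (simp add: ennreal_le_iff)
qed

lemma far_points_around:
  fixes C :: "real set"
  assumes fin: "finite C" and \<sigma>: "\<sigma> \<in> C" and L: "L \<ge> 0" and e: "e > 0"
  obtains p q where "\<sigma> - (2 * real (card C) - 1) * L - e < p" "p < \<sigma>"
    "\<sigma> < q" "q < \<sigma> + (2 * real (card C) - 1) * L + e"
    "\<forall>c\<in>C. L < \<bar>p - c\<bar>" "\<forall>c\<in>C. L < \<bar>q - c\<bar>"
proof -
  define D where "D = (2 * real (card C) - 1) * L"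
  have far_point: "\<exists>g\<in>{a..b}. \<forall>c\<in>C. L < \<bar>g - c\<bar>" if "b - a = 2 * real (card C) * L + e / 2" for a b
  proof (rule ccontr)
    assume "\<not> ?thesis"
    then have "{a..b} \<subseteq> (\<Union>c\<in>C. {c - L..c + L})"
      by (force simp: abs_le_iff)
    moreover have "0 \<le> 2 * real (card C) * L"
      using L by simp
    ultimately show False
      using interval_length_le_cover[OF fin L, of a b] that e by linarith
  qed
  have "(\<sigma> + L) - (\<sigma> - D - e / 2) = 2 * real (card C) * L + e / 2"
       "(\<sigma> + D + e / 2) - (\<sigma> - L) = 2 * real (card C) * L + e / 2"
    by (simp_all add: D_def algebra_simps)
  then obtain p q where p: "p \<in> {\<sigma> - D - e / 2..\<sigma> + L}" "\<forall>c\<in>C. L < \<bar>p - c\<bar>"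
    and q: "q \<in> {\<sigma> - L..\<sigma> + D + e / 2}" "\<forall>c\<in>C. L < \<bar>q - c\<bar>"
    using far_point by meson
  have "p < \<sigma>" "\<sigma> < q"
    using p q \<sigma> L by force+
  with p q e show ?thesis
    by (intro that[of p q]) (auto simp: D_def)
qed

lemma (in factorised_poly) amoeba_point_near_corner:
  assumes two: "card (supp f) \<ge> 2" and fin: "finite (corners f)"
    and \<sigma>: "\<sigma> \<in> corners f" and e: "e > 0"
  obtains \<rho> where "\<rho> \<in> Amoeba f"
    "\<bar>\<rho> - \<sigma>\<bar> \<le> (2 * real (card (corners f)) - 1) * ln (real (card (supp f)) - 1) + e"
proof -
  define L where "L = ln (real (card (supp f)) - 1)"
  have "L \<ge> 0" using two by (simp add: L_def)
  obtain p q where p: "\<sigma> - (2 * real (card (corners f)) - 1) * L - e < p" "p < \<sigma>"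
    and q: "\<sigma> < q" "q < \<sigma> + (2 * real (card (corners f)) - 1) * L + e"
    and far: "\<forall>c\<in>corners f. L < \<bar>p - c\<bar>" "\<forall>c\<in>corners f. L < \<bar>q - c\<bar>"
    by (rule far_points_around[OF fin \<sigma> \<open>L \<ge> 0\<close> e])
  obtain ip where ip: "ip \<in> supp f" "dominance_ratio f ip (exp p) < 1"
    by (rule dominant_far_from_corners[OF two far(1)[unfolded L_def, rule_format]])
  obtain iq where iq: "iq \<in> supp f" "dominance_ratio f iq (exp q) < 1"
    by (rule dominant_far_from_corners[OF two far(2)[unfolded L_def, rule_format]])
  have "ip \<noteq> iq"
    by (rule dominant_indices_differ_across_corner[OF \<sigma> p(2) q(1) ip iq])
  obtain \<rho> where \<rho>: "\<rho> \<in> Amoeba f" "p \<le> \<rho>" "\<rho> < q"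
    by (rule amoeba_point_between_dominant_radii[OF order.strict_trans[OF p(2) q(1)] ip iq \<open>ip \<noteq> iq\<close>])
  have "\<bar>\<rho> - \<sigma>\<bar> \<le> (2 * real (card (corners f)) - 1) * L + e"
    using \<rho> p q by auto
  with \<rho>(1) show ?thesis
    unfolding L_def by (rule that)
qed

theorem corollary3p1:
  fixes f :: "complex poly" and t l :: nat
  assumes "card (supp f) = t" and "t \<ge> 2"
    and "finite (ArchTrop f)" and "card (ArchTrop f) = l"
  shows "(SUP \<sigma>\<in>ArchTrop f. INF \<rho>\<in>Amoeba f. \<bar>\<rho> - \<sigma>\<bar>)
           \<le> (2 * real l - 1) * ln (real t - 1)"
proof -
  have two: "card (supp f) \<ge> 2" and "supp f \<noteq> {}"
    using assms(1,2) by auto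
  then have "f \<noteq> 0" by (auto simp: supp_def)
  obtain root where "smult (lead_coeff f) (\<Prod>k<degree f. [:-root k, 1:]) = f"
    by (rule complex_poly_decompose')
  with \<open>f \<noteq> 0\<close> have roots: "factorised_poly f root"
    by unfold_locales
  have corners: "ArchTrop f = corners f"
    by (rule ArchTrop_eq_corners[OF \<open>supp f \<noteq> {}\<close>])
  with assms have fin: "finite (corners f)" and card: "card (corners f) = l"
    by simp_all
  have "(INF \<rho>\<in>Amoeba f. \<bar>\<rho> - \<sigma>\<bar>) \<le> (2 * real l - 1) * ln (real t - 1)"
    if \<sigma>: "\<sigma> \<in> corners f" for \<sigma>
  proof (rule field_le_epsilon)
    fix e :: real assume "e > 0"
    obtain \<rho> where "\<rho> \<in> Amoeba f"
      "\<bar>\<rho> - \<sigma>\<bar> \<le> (2 * real (card (corners f)) - 1) * ln (real (card (supp f)) - 1) + e"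
      by (rule factorised_poly.amoeba_point_near_corner[OF roots two fin \<sigma> \<open>e > 0\<close>])
    then show "(INF \<rho>\<in>Amoeba f. \<bar>\<rho> - \<sigma>\<bar>) \<le> (2 * real l - 1) * ln (real t - 1) + e"
      unfolding card assms(1) by (meson abs_ge_zero bdd_belowI2 cINF_lower2)
  qed
  then show ?thesis
    unfolding corners using corners_nonempty[OF two] by (rule cSUP_least[rotated])
qed

end
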